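(* Let $m,n\in\mathbb{N}$ with $m\ge 1$. If $m$ and $n$ are both even, $m\mid 3n$, and $4\nmid n$, then the friendship graph $F_n$ is not $\mathbb{Z}_m$-cordial.
   Context: Graphs are finite, simple and undirected. For $n\in\mathbb{N}$, the friendship graph $F_n$ is the union of $n$ copies of the triangle $C_3$ joined at a single common (central) vertex. For an abelian group $A$ and a graph $G=(V,E)$, a vertex labeling $\ell:V\to A$ induces an edge labeling $\ell(\{v_1,v_2\})=\ell(v_1)+\ell(v_2)$. Let $f_V(a)=|\{v\in V:\ell(v)=a\}|$ and $f_E(a)=|\{e\in E:\ell(e)=a\}|$. The labeling is $A$-cordial if $|f_V(a_1)-f_V(a_2)|\le 1$ and $|f_E(a_1)-f_E(a_2)|\le 1$ for all $a_1,a_2\in A$; $G$ is $A$-cordial if it admits an $A$-cordial labeling. *)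

theory Defs
  imports Main
begin

text \<open>A finite simple graph is given by a vertex set V and an edge set E of
  2-element subsets of V. The cyclic group Z_m is represented by the residues
  {0..<m} with addition modulo m.\<close>

definition simple_graph :: "'a set \<Rightarrow> 'a set set \<Rightarrow> bool" where
  "simple_graph V E \<longleftrightarrow> finite V \<and> (\<forall>e\<in>E. e \<subseteq> V \<and> card e = 2)"

definition friendship_V :: "nat \<Rightarrow> nat set" where
  "friendship_V n = {0..2*n}"

definition friendship_E :: "nat \<Rightarrow> nat set set" where
  "friendship_E n = (\<Union>i\<in>{1..n}. {{0, 2*i - 1}, {0, 2*i}, {2*i - 1, 2*i}})"

definition vcount :: "'a set \<Rightarrow> ('a \<Rightarrow> nat) \<Rightarrow> nat \<Rightarrow> nat" where
  "vcount V l a = card {v\<in>V. l v = a}"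

definition ecount :: "nat \<Rightarrow> 'a set set \<Rightarrow> ('a \<Rightarrow> nat) \<Rightarrow> nat \<Rightarrow> nat" where
  "ecount m E l a = card {e\<in>E. \<exists>u v. e = {u, v} \<and> u \<noteq> v \<and> (l u + l v) mod m = a}"

definition Zm_cordial_labeling :: "nat \<Rightarrow> 'a set \<Rightarrow> 'a set set \<Rightarrow> ('a \<Rightarrow> nat) \<Rightarrow> bool" where
  "Zm_cordial_labeling m V E l \<longleftrightarrow>
     (\<forall>v\<in>V. l v < m) \<and>
     (\<forall>a1<m. \<forall>a2<m. vcount V l a1 \<le> vcount V l a2 + 1 \<and>
                      ecount m E l a1 \<le> ecount m E l a2 + 1)"

definition Zm_cordial :: "nat \<Rightarrow> 'a set \<Rightarrow> 'a set set \<Rightarrow> bool" where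
  "Zm_cordial m V E \<longleftrightarrow> (\<exists>l. Zm_cordial_labeling m V E l)"

end

theory Submission
  imports Defs
begin

text \<open>The three pairwise sums of the labels of a triangle add up to an even number, so an
  even number of them is odd; as m is even, reduction mod m preserves parity, hence F_n has
  an even number of edges with odd label. On the other hand m divides the number 3n of edges,
  so cordiality forces every label to occur exactly 3n/m times, and the m/2 odd labels
  carry 3n/2 edges. This number is even only if 4 divides n.\<close>

lemma card_mult_eq_sum_if_balanced:
  fixes f :: "'a \<Rightarrow> nat"
  assumes "finite A" and balanced: "\<forall>x\<in>A. \<forall>y\<in>A. f x \<le> f y + 1"
    and dvd: "card A dvd sum f A" and "x \<in> A"
  shows "card A * f x = sum f A"
proof (cases "\<forall>y\<in>A. f y = f x")
  case True
  then show ?thesis by simp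
next
  case False
  then obtain y where "y \<in> A" "f y \<noteq> f x" by blast
  define c where "c = Min (f ` A)"
  have "c \<in> f ` A"
    using \<open>finite A\<close> \<open>x \<in> A\<close> unfolding c_def by (intro Min_in) auto
  then obtain z where z: "z \<in> A" "f z = c" by auto
  have range: "c \<le> f w \<and> f w \<le> c + 1" if "w \<in> A" for w
    using that z balanced \<open>finite A\<close> unfolding c_def
    by (metis Min_le finite_imageI image_eqI)
  obtain w where w: "w \<in> A" "f w = c + 1"
  proof -
    have "f x = c + 1 \<or> f y = c + 1"
      using range[OF \<open>x \<in> A\<close>] range[OF \<open>y \<in> A\<close>] \<open>f y \<noteq> f x\<close> by linarith
    then show ?thesis using that \<open>x \<in> A\<close> \<open>y \<in> A\<close> by blast
  qed
  text \<open>Both values c and c + 1 occur, so the sum lies strictly between two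
    consecutive multiples of card A.\<close>
  have "(\<Sum>_\<in>A. c) < sum f A"
    by (rule sum_strict_mono_ex1)
      (use \<open>finite A\<close> range w in \<open>auto intro!: bexI[of _ w]\<close>)
  moreover have "sum f A < (\<Sum>_\<in>A. c + 1)"
    by (rule sum_strict_mono_ex1)
      (use \<open>finite A\<close> range z in \<open>auto intro!: bexI[of _ z]\<close>)
  moreover obtain q where "sum f A = card A * q"
    using dvd by blast
  ultimately have "card A * c < card A * q" "card A * q < card A * (c + 1)"
    by simp_all
  then have "c < q" "q < c + 1"
    by (meson mult_less_cancel1)+
  then show ?thesis by linarith
qed

lemma card_odd_less_double: "card {a. a < 2 * t \<and> odd (a::nat)} = t"
proof -
  have "{a. a < 2 * t \<and> odd a} = (\<lambda>k. 2 * k + 1) ` {..<t}"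
    by (auto elim!: oddE)
  then show ?thesis
    by (simp add: card_image inj_on_def)
qed

lemma even_count_odd_pairwise_sums:
  "even (of_bool (odd (a + b)) + of_bool (odd (a + c)) + of_bool (odd (b + c)) :: nat)"
  by auto

lemma ecount_eq_sum_of_bool:
  assumes "finite E"
  shows "ecount m E l a =
    (\<Sum>e\<in>E. of_bool (\<exists>u v. e = {u, v} \<and> u \<noteq> v \<and> (l u + l v) mod m = a))"
  using assms by (simp add: ecount_def Collect_conj_eq Int_commute)

lemma doubleton_edge_label_iff:
  fixes l :: "'a \<Rightarrow> nat"
  assumes "x \<noteq> y"
  shows "(\<exists>u v. {x, y} = {u, v} \<and> u \<noteq> v \<and> (l u + l v) mod m = a) \<longleftrightarrow>
    (l x + l y) mod m = a"
  using assms by (auto simp: doubleton_eq_iff add.commute)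

lemma sum_friendship_E:
  "(\<Sum>e\<in>friendship_E n. h e) = (\<Sum>i\<in>{1..n}. h {0, 2*i-1} + h {0, 2*i} + h {2*i-1, 2*i})"
proof -
  have "(\<Sum>e\<in>friendship_E n. h e) =
      (\<Sum>i\<in>{1..n}. \<Sum>e\<in>{{0, 2*i-1}, {0, 2*i}, {2*i-1, 2*i}}. h e)"
    unfolding friendship_E_def by (rule sum.UNION_disjoint) (auto simp: doubleton_eq_iff)
  also have "\<dots> = (\<Sum>i\<in>{1..n}. h {0, 2*i-1} + h {0, 2*i} + h {2*i-1, 2*i})"
    by (rule sum.cong) (auto simp: doubleton_eq_iff add.assoc)
  finally show ?thesis .
qed

lemma ecount_friendship:
  "ecount m (friendship_E n) l a =
     (\<Sum>i\<in>{1..n}. of_bool ((l 0 + l (2*i-1)) mod m = a) + of_bool ((l 0 + l (2*i)) mod m = a)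
                 + of_bool ((l (2*i-1) + l (2*i)) mod m = a))"
proof -
  have "finite (friendship_E n)"
    by (simp add: friendship_E_def)
  then show ?thesis
    unfolding ecount_eq_sum_of_bool[OF \<open>finite (friendship_E n)\<close>] sum_friendship_E
  proof (intro sum.cong refl)
    fix i assume "i \<in> {1..n}"
    then have "0 \<noteq> 2*i-1" "0 \<noteq> 2*i" "2*i-1 \<noteq> 2*i" by auto
    from doubleton_edge_label_iff[OF this(1)] doubleton_edge_label_iff[OF this(2)]
      doubleton_edge_label_iff[OF this(3)]
    show "of_bool (\<exists>u v. {0, 2*i-1} = {u, v} \<and> u \<noteq> v \<and> (l u + l v) mod m = a)
        + of_bool (\<exists>u v. {0, 2*i} = {u, v} \<and> u \<noteq> v \<and> (l u + l v) mod m = a)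
        + of_bool (\<exists>u v. {2*i-1, 2*i} = {u, v} \<and> u \<noteq> v \<and> (l u + l v) mod m = a)
      = of_bool ((l 0 + l (2*i-1)) mod m = a) + of_bool ((l 0 + l (2*i)) mod m = a)
        + (of_bool ((l (2*i-1) + l (2*i)) mod m = a) :: nat)"
      by (simp only:)
  qed
qed

lemma sum_ecount_friendship:
  assumes "finite S"
  shows "(\<Sum>a\<in>S. ecount m (friendship_E n) l a) =
     (\<Sum>i\<in>{1..n}. of_bool ((l 0 + l (2*i-1)) mod m \<in> S) + of_bool ((l 0 + l (2*i)) mod m \<in> S)
                 + of_bool ((l (2*i-1) + l (2*i)) mod m \<in> S))"
  unfolding ecount_friendship sum.swap[where A = S]
  using assms by (simp add: sum.distrib of_bool_def)

lemma sum_ecount_friendship_lessThan: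
  assumes "0 < m"
  shows "(\<Sum>a<m. ecount m (friendship_E n) l a) = 3 * n"
  using assms by (simp add: sum_ecount_friendship)

lemma even_sum_ecount_friendship_odd_labels:
  assumes "0 < m" and "even m"
  shows "even (\<Sum>a\<in>{a. a < m \<and> odd a}. ecount m (friendship_E n) l a)"
proof -
  have label_odd_iff: "s mod m \<in> {a. a < m \<and> odd a} \<longleftrightarrow> odd s" for s
    using assms by (simp add: dvd_mod_iff)
  have "finite {a. a < m \<and> odd a}" by simp
  show ?thesis
    unfolding sum_ecount_friendship[OF \<open>finite {a. a < m \<and> odd a}\<close>] label_odd_iff
    by (intro dvd_sum even_count_odd_pairwise_sums)
qed

lemma Zm_cordial_labeling_ecount_uniform:
  assumes "Zm_cordial_labeling m V E l"
    and total: "(\<Sum>a<m. ecount m E l a) = k" and "m dvd k" and "a < m"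
  shows "m * ecount m E l a = k"
proof -
  have "\<forall>a\<in>{..<m}. \<forall>b\<in>{..<m}. ecount m E l a \<le> ecount m E l b + 1"
    using assms(1) unfolding Zm_cordial_labeling_def by blast
  then show ?thesis
    using card_mult_eq_sum_if_balanced[of "{..<m}" "ecount m E l" a]
      total \<open>m dvd k\<close> \<open>a < m\<close>
    by simp
qed

theorem theorem7p1:
  fixes m n :: nat
  assumes "m \<ge> 1" and "even m" and "even n" and "m dvd 3 * n" and "\<not> 4 dvd n"
  shows "\<not> Zm_cordial m (friendship_V n) (friendship_E n)"
proof
  assume "Zm_cordial m (friendship_V n) (friendship_E n)"
  then obtain l where cordial: "Zm_cordial_labeling m (friendship_V n) (friendship_E n) l"
    unfolding Zm_cordial_def by blast
  define ec where "ec = ecount m (friendship_E n) l"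
  define odd_count where "odd_count = (\<Sum>a\<in>{a. a < m \<and> odd a}. ec a)"
  have "0 < m" using assms(1) by simp
  have uniform: "m * ec a = 3 * n" if "a < m" for a
    unfolding ec_def
    using Zm_cordial_labeling_ecount_uniform[OF cordial _ assms(4) that]
      sum_ecount_friendship_lessThan[OF \<open>0 < m\<close>]
    by blast
  obtain t where t: "m = 2 * t" using assms(2) by blast
  then have "card {a. a < m \<and> odd a} = t"
    by (simp add: card_odd_less_double)
  then have "m * odd_count = t * (3 * n)"
    unfolding odd_count_def sum_distrib_left using uniform by simp
  then have "2 * odd_count = 3 * n"
    using t \<open>0 < m\<close> by simp
  moreover have "even odd_count"
    unfolding odd_count_def ec_def
    using even_sum_ecount_friendship_odd_labels \<open>0 < m\<close> assms(2) .
  ultimately show False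
    using assms(5) by presburger
qed

end
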